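(* Let $R$ be a positive integer, let $A \in \mathbb{R}^{R \times d_{\text{in}}}$ and $B \in \mathbb{R}^{d_{\text{out}} \times R}$, let $\vec{a}_i \in \mathbb{R}^{1\times d_{\text{in}}}$ denote the $i$-th row of $A$ and $\vec{b}_i \in \mathbb{R}^{d_{\text{out}}\times 1}$ the $i$-th column of $B$. For $r \in \{1,\dots,R\}$ define $f(\vec{x}; r) = \left(\sum_{i=1}^{r} \vec{b}_i \vec{a}_i\right)\vec{x}$ for $\vec{x}\in\mathbb{R}^{d_{\text{in}}}$. Let $(\vec{x},y)$ be a random pair with $\mathbb{E}[\|\vec{x}\|]<\infty$, and let $\mathcal{L}(\cdot, y)$ be a loss function that is $L_{\mathcal{L}}$-Lipschitz continuous in its first argument (with respect to the Euclidean norm on $\mathbb{R}^{d_{\text{out}}}$), uniformly in $y$. Let $E(r) = \mathbb{E}_{(\vec{x},y)}[\mathcal{L}(f(\vec{x}; r), y)]$ be the expected error at rank $r$. Then for any ranks $r_1 < r_{\text{int}} < R$, $$ |E(r_{\text{int}}) - E(r_1)| \le C \sum_{i=r_1+1}^{r_{\text{int}}} \|\vec{b}_i\|\,\|\vec{a}_i\|, $$ where $C = L_{\mathcal{L}} \cdot \mathbb{E}[\|\vec{x}\|]$.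
   Context: $\|\cdot\|$ denotes the Euclidean norm of a vector (row or column). The map $f(\cdot; r)$ is the output of a "nested subspace" linear layer truncated to rank $r$, i.e. using the weight matrix $W_r = B_r A_r$ where $A_r$ consists of the first $r$ rows of $A$ and $B_r$ of the first $r$ columns of $B$. *)

theory Defs
  imports "HOL-Analysis.Analysis" "HOL-Probability.Probability"
begin

text \<open>Truncated weight matrix W_r = B_r A_r = sum_{i=1}^r b_i a_i, where a i is the
  i-th row of A (i = 1..R) and b i the i-th column of B.\<close>
definition trunc_weight ::
  "(nat \<Rightarrow> real^'din) \<Rightarrow> (nat \<Rightarrow> real^'dout) \<Rightarrow> nat \<Rightarrow> real^'din^'dout" where
  "trunc_weight a b r = (\<Sum>i\<in>{1..r}. (\<chi> j k. (b i) $ j * (a i) $ k))"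

definition nested_layer ::
  "(nat \<Rightarrow> real^'din) \<Rightarrow> (nat \<Rightarrow> real^'dout) \<Rightarrow> real^'din \<Rightarrow> nat \<Rightarrow> real^'dout" where
  "nested_layer a b x r = trunc_weight a b r *v x"

end

theory Submission
  imports Defs
begin

text \<open>Truncating at rank n instead of m changes the layer output by the rank-one terms
  (a i \<bullet> x) b i with m < i \<le> n, each of norm at most |b i| |a i| |x|. Composing with the
  Lipschitz loss bounds the pointwise change of the loss by L |x| times the sum of these
  weights, and integrating gives the claim. Since Bochner integrals of non-integrable
  functions are 0, no integrability of the loss has to be assumed; neither are the probability-space,
  rank-range and measurability-of-X hypotheses used.\<close>

lemma outer_product_mult_vector:
  fixes a x :: "real^'n" and b :: "real^'m"
  shows "(\<chi> j k. b $ j * a $ k) *v x = (a \<bullet> x) *\<^sub>R b"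
  by (simp add: vec_eq_iff matrix_vector_mult_def inner_vec_def sum_distrib_left
      mult.commute mult.left_commute)

lemma sum_matrix_vector_mult:
  fixes x :: "real^'n"
  assumes "finite S"
  shows "sum f S *v x = (\<Sum>i\<in>S. f i *v x)"
  using assms by (induction S rule: finite_induct) (auto simp: matrix_vector_mult_add_rdistrib)

lemma nested_layer_eq_sum: "nested_layer a b x r = (\<Sum>i\<in>{1..r}. (a i \<bullet> x) *\<^sub>R b i)"
  unfolding nested_layer_def trunc_weight_def
  by (simp add: sum_matrix_vector_mult outer_product_mult_vector)

lemma nested_layer_diff_eq_sum:
  assumes "m \<le> n"
  shows "nested_layer a b x n - nested_layer a b x m = (\<Sum>i\<in>{m+1..n}. (a i \<bullet> x) *\<^sub>R b i)"
proof -
  have "{1..n} = {1..m} \<union> {m+1..n}" using assms by auto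
  then show ?thesis
    unfolding nested_layer_eq_sum by (simp add: sum.union_disjoint ivl_disj_int)
qed

lemma norm_inner_scaleR_le: "norm ((a \<bullet> x) *\<^sub>R v) \<le> norm v * norm a * norm x"
proof -
  have "\<bar>a \<bullet> x\<bar> * norm v \<le> norm a * norm x * norm v"
    by (intro mult_right_mono Cauchy_Schwarz_ineq2 norm_ge_zero)
  then show ?thesis by (simp add: mult_ac)
qed

lemma norm_nested_layer_diff_le:
  assumes "m \<le> n"
  shows "norm (nested_layer a b x n - nested_layer a b x m)
         \<le> (\<Sum>i\<in>{m+1..n}. norm (b i) * norm (a i)) * norm x"
proof -
  have "norm (nested_layer a b x n - nested_layer a b x m)
        \<le> (\<Sum>i\<in>{m+1..n}. norm ((a i \<bullet> x) *\<^sub>R b i))"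
    unfolding nested_layer_diff_eq_sum[OF assms] by (rule norm_sum)
  also have "\<dots> \<le> (\<Sum>i\<in>{m+1..n}. norm (b i) * norm (a i) * norm x)"
    by (intro sum_mono norm_inner_scaleR_le)
  finally show ?thesis by (simp add: sum_distrib_right)
qed

lemma abs_integral_diff_le:
  fixes f g h :: "'a \<Rightarrow> real"
  assumes f: "f \<in> borel_measurable M" and g: "g \<in> borel_measurable M"
    and h: "integrable M h"
    and bound: "\<And>x. x \<in> space M \<Longrightarrow> \<bar>f x - g x\<bar> \<le> h x"
  shows "\<bar>integral\<^sup>L M f - integral\<^sup>L M g\<bar> \<le> integral\<^sup>L M h"
proof -
  have diff: "integrable M (\<lambda>x. f x - g x)"
    by (rule Bochner_Integration.integrable_bound[OF h]) (use f g bound in \<open>auto intro: order_trans[OF _ abs_ge_self]\<close>)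
  have f_iff_g: "integrable M f \<longleftrightarrow> integrable M g"
    using Bochner_Integration.integrable_diff[OF _ diff, of f]
      Bochner_Integration.integrable_add[OF diff, of g]
    by auto
  show ?thesis
  proof (cases "integrable M f")
    case True
    with f_iff_g have "\<bar>integral\<^sup>L M f - integral\<^sup>L M g\<bar> = \<bar>\<integral>x. f x - g x \<partial>M\<bar>" by simp
    also have "\<dots> \<le> (\<integral>x. \<bar>f x - g x\<bar> \<partial>M)" by (rule integral_abs_bound)
    also have "\<dots> \<le> integral\<^sup>L M h"
      using bound by (intro integral_mono h integrable_abs diff) auto
    finally show ?thesis .
  next
    case False
    with f_iff_g have "integral\<^sup>L M f = 0" "integral\<^sup>L M g = 0"
      by (simp_all add: not_integrable_integral_eq)
    moreover have "0 \<le> integral\<^sup>L M h"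
      using bound by (intro integral_nonneg_AE AE_I2) (fastforce intro: order_trans[OF abs_ge_zero])
    ultimately show ?thesis by simp
  qed
qed

theorem proposition1:
  fixes M :: "'w measure"
    and a :: "nat \<Rightarrow> real^'din" and b :: "nat \<Rightarrow> real^'dout"
    and R :: nat
    and X :: "'w \<Rightarrow> real^'din" and Y :: "'w \<Rightarrow> 'y"
    and Loss :: "real^'dout \<Rightarrow> 'y \<Rightarrow> real" and LL :: real
    and r1 rint :: nat
  assumes "prob_space M"
    and "R > 0"
    and "X \<in> borel_measurable M"
    and "integrable M (\<lambda>\<omega>. norm (X \<omega>))"
    and "\<And>r. (\<lambda>\<omega>. Loss (nested_layer a b (X \<omega>) r) (Y \<omega>)) \<in> borel_measurable M"
    and "\<And>y. LL-lipschitz_on UNIV (\<lambda>u. Loss u y)"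
    and "1 \<le> r1" and "r1 < rint" and "rint < R"
  shows "\<bar>(\<integral>\<omega>. Loss (nested_layer a b (X \<omega>) rint) (Y \<omega>) \<partial>M)
           - (\<integral>\<omega>. Loss (nested_layer a b (X \<omega>) r1) (Y \<omega>) \<partial>M)\<bar>
         \<le> (LL * (\<integral>\<omega>. norm (X \<omega>) \<partial>M)) * (\<Sum>i\<in>{r1+1..rint}. norm (b i) * norm (a i))"
proof -
  define S where "S = (\<Sum>i\<in>{r1+1..rint}. norm (b i) * norm (a i))"
  have "LL \<ge> 0" using assms(6) lipschitz_on_nonneg by blast
  have pointwise: "\<bar>Loss (nested_layer a b x rint) y - Loss (nested_layer a b x r1) y\<bar>
                   \<le> LL * S * norm x" for x y
  proof -
    have "\<bar>Loss (nested_layer a b x rint) y - Loss (nested_layer a b x r1) y\<bar>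
          \<le> LL * norm (nested_layer a b x rint - nested_layer a b x r1)"
      using lipschitz_onD[OF assms(6)] by (simp add: dist_norm)
    also have "\<dots> \<le> LL * (S * norm x)"
      unfolding S_def using \<open>LL \<ge> 0\<close> assms(8)
      by (intro mult_left_mono norm_nested_layer_diff_le) auto
    finally show ?thesis by (simp add: mult.assoc)
  qed
  have "\<bar>(\<integral>\<omega>. Loss (nested_layer a b (X \<omega>) rint) (Y \<omega>) \<partial>M)
          - (\<integral>\<omega>. Loss (nested_layer a b (X \<omega>) r1) (Y \<omega>) \<partial>M)\<bar>
        \<le> (\<integral>\<omega>. LL * S * norm (X \<omega>) \<partial>M)"
    using assms(4,5) pointwise by (intro abs_integral_diff_le) auto
  then show ?thesis unfolding S_def by (simp add: mult_ac)
qed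

end
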